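(* Under the full cost model, the competitive ratio of the (offline-chosen) better algorithm among MTFE, MTFO and TS is at least $1.6$: for every $c<1.6$ and every constant $b$, there exist a list and a request sequence $\sigma$ with $\min\{\mathrm{TS}(\sigma),\mathrm{MTFO}(\sigma),\mathrm{MTFE}(\sigma)\}>c\cdot\mathrm{OPT}(\sigma)+b$.
   Context: Static list update: a list of $l$ distinct items in some initial order; serving a request to the item at position $i$ (from the front) costs $i$ (full cost model); the accessed item may be moved closer to the front for free; two adjacent items may be swapped at cost $1$. $A(\sigma)$ is the total cost of algorithm $A$ and $\mathrm{OPT}(\sigma)$ the minimum cost of any offline algorithm from the same initial list. MTFO moves a requested item to the front on the 1st, 3rd, 5th, ... request to that item; MTFE on the 2nd, 4th, 6th, ... request; otherwise they leave it in place. TS (Timestamp): on a request to item $x$, if $x$ has been requested before and some item preceding $x$ has been requested at most once since the previous request to $x$, then $x$ is moved to immediately in front of the frontmost such item; otherwise nothing moves. *)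

theory Defs
  imports Complex_Main
begin

text \<open>0-based position of an item in a list; accessing the item at 0-based
position p costs p+1 (full cost model).\<close>
definition pos :: "'a list \<Rightarrow> 'a \<Rightarrow> nat" where
  "pos xs x = length (takeWhile (\<lambda>y. y \<noteq> x) xs)"

definition move_to :: "nat \<Rightarrow> 'a \<Rightarrow> 'a list \<Rightarrow> 'a list" where
  "move_to j x xs = take j (remove1 x xs) @ x # drop j (remove1 x xs)"

definition mtf :: "'a \<Rightarrow> 'a list \<Rightarrow> 'a list" where
  "mtf x xs = move_to 0 x xs"

definition swap_adj :: "nat \<Rightarrow> 'a list \<Rightarrow> 'a list" where
  "swap_adj k ys = ys[k := ys ! Suc k, Suc k := ys ! k]"

inductive swaps :: "'a list \<Rightarrow> 'a list \<Rightarrow> nat \<Rightarrow> bool" where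
  swaps_refl: "swaps xs xs 0"
| swaps_step: "swaps xs ys n \<Longrightarrow> Suc k < length ys \<Longrightarrow> swaps xs (swap_adj k ys) (Suc n)"

text \<open>Before each request, any number of paid adjacent swaps
(cost 1 each); then the access (cost = 1-based position); then the accessed
item may be moved forward to any position for free.\<close>
inductive off_cost :: "'a list \<Rightarrow> 'a list \<Rightarrow> nat \<Rightarrow> bool" where
  off_nil: "off_cost xs [] 0"
| off_cons: "swaps xs ys n \<Longrightarrow> j \<le> pos ys x \<Longrightarrow> off_cost (move_to j x ys) \<sigma> c
     \<Longrightarrow> off_cost xs (x # \<sigma>) (n + (pos ys x + 1) + c)"

definition OPT :: "'a list \<Rightarrow> 'a list \<Rightarrow> nat" where
  "OPT xs \<sigma> = (LEAST c. off_cost xs \<sigma> c)"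

text \<open>Cost of a deterministic online algorithm given by a step function
f hs xs x (hs = previous requests in chronological order, xs = current list,
x = current request; result = list after serving x).\<close>
fun run_cost :: "('a list \<Rightarrow> 'a list \<Rightarrow> 'a \<Rightarrow> 'a list) \<Rightarrow> 'a list \<Rightarrow> 'a list \<Rightarrow> 'a list \<Rightarrow> nat" where
  "run_cost f hs xs [] = 0"
| "run_cost f hs xs (x # \<sigma>) = (pos xs x + 1) + run_cost f (hs @ [x]) (f hs xs x) \<sigma>"

definition mtfo_step :: "'a list \<Rightarrow> 'a list \<Rightarrow> 'a \<Rightarrow> 'a list" where
  "mtfo_step hs xs x = (if odd (count_list hs x + 1) then mtf x xs else xs)"

definition mtfe_step :: "'a list \<Rightarrow> 'a list \<Rightarrow> 'a \<Rightarrow> 'a list" where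
  "mtfe_step hs xs x = (if even (count_list hs x + 1) then mtf x xs else xs)"

definition since_last :: "'a list \<Rightarrow> 'a \<Rightarrow> 'a list" where
  "since_last hs x = rev (takeWhile (\<lambda>y. y \<noteq> x) (rev hs))"

definition ts_step :: "'a list \<Rightarrow> 'a list \<Rightarrow> 'a \<Rightarrow> 'a list" where
  "ts_step hs xs x =
    (let cands = filter (\<lambda>y. count_list (since_last hs x) y \<le> 1) (take (pos xs x) xs)
     in if x \<in> set hs \<and> cands \<noteq> [] then move_to (pos xs (hd cands)) x xs else xs)"

definition MTFO :: "'a list \<Rightarrow> 'a list \<Rightarrow> nat" where
  "MTFO xs \<sigma> = run_cost mtfo_step [] xs \<sigma>"

definition MTFE :: "'a list \<Rightarrow> 'a list \<Rightarrow> nat" where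
  "MTFE xs \<sigma> = run_cost mtfe_step [] xs \<sigma>"

definition TS :: "'a list \<Rightarrow> 'a list \<Rightarrow> nat" where
  "TS xs \<sigma> = run_cost ts_step [] xs \<sigma>"

end

theory Submission imports Defs begin

text \<open>Take 28 items 0..27 and let a round consist of five sweeps over the list: upwards once,
  upwards with every item requested twice in a row (two times), downwards once, and downwards
  with every item requested three times in a row. Starting from the list 0..27, TS pays 4032
  per round, and MTFO and MTFE each pay 8064 per two rounds, while the offline algorithm that
  moves items to the front exactly during the second doubled and the tripled sweep pays 2520
  per round and restores the list. Hence the ratio is 8064/5040 = 1.6 on every number of
  double rounds, and the additive constant is beaten by taking enough of them.

  All three online algorithms look at the past only through a per-item observation of the
  request history: MTFO and MTFE through the parity of the number of requests to the item, TS
  through the requests since its last request. Since every sweep requests every item, these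
  observations, and hence the algorithms, are periodic, and one period is computed by
  evaluation, with the history replaced after each sweep by a short one that is
  indistinguishable from it.\<close>

definition hist_equiv :: "('a list \<Rightarrow> 'a \<Rightarrow> 'b) \<Rightarrow> 'a set \<Rightarrow> 'a list \<Rightarrow> 'a list \<Rightarrow> bool" where
  "hist_equiv obs S h h' \<longleftrightarrow> (\<forall>x\<in>S. obs h x = obs h' x)"

definition snoc_congruent :: "('a list \<Rightarrow> 'a \<Rightarrow> 'b) \<Rightarrow> bool" where
  "snoc_congruent obs \<longleftrightarrow> (\<forall>h h' y x. obs h x = obs h' x \<longrightarrow> obs (h @ [y]) x = obs (h' @ [y]) x)"

definition depends_on_history_via :: "('a list \<Rightarrow> 'a list \<Rightarrow> 'a \<Rightarrow> 'a list) \<Rightarrow> ('a list \<Rightarrow> 'a \<Rightarrow> 'b) \<Rightarrow> 'a set \<Rightarrow> bool" where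
  "depends_on_history_via f obs S \<longleftrightarrow> (\<forall>h h' xs x. hist_equiv obs S h h' \<longrightarrow> x \<in> S \<longrightarrow> f h xs x = f h' xs x)"

lemma hist_equiv_refl [simp]: "hist_equiv obs S h h"
  by (simp add: hist_equiv_def)

lemma hist_equiv_trans: "hist_equiv obs S h h' \<Longrightarrow> hist_equiv obs S h' h'' \<Longrightarrow> hist_equiv obs S h h''"
  by (simp add: hist_equiv_def)

lemma hist_equiv_append:
  assumes "snoc_congruent obs" "hist_equiv obs S h h'"
  shows "hist_equiv obs S (h @ zs) (h' @ zs)"
  using assms(2)
proof (induction zs arbitrary: h h')
  case (Cons z zs)
  have "hist_equiv obs S (h @ [z]) (h' @ [z])"
    using assms(1) Cons.prems unfolding hist_equiv_def snoc_congruent_def by blast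
  then show ?case using Cons.IH by fastforce
qed simp

definition parity_obs :: "'a list \<Rightarrow> 'a \<Rightarrow> bool" where
  "parity_obs h x = even (count_list h x)"

definition ts_obs :: "'a list \<Rightarrow> 'a \<Rightarrow> bool \<times> 'a list" where
  "ts_obs h x = (x \<in> set h, since_last h x)"

lemma since_last_snoc: "since_last (h @ [y]) x = (if y = x then [] else since_last h x @ [y])"
  by (simp add: since_last_def)

lemma snoc_congruent_parity_obs: "snoc_congruent parity_obs"
  unfolding snoc_congruent_def parity_obs_def by auto

lemma snoc_congruent_ts_obs: "snoc_congruent ts_obs"
  unfolding snoc_congruent_def ts_obs_def by (auto simp: since_last_snoc)

lemma ts_obs_append: "x \<in> set \<sigma> \<Longrightarrow> ts_obs (h @ \<sigma>) x = ts_obs \<sigma> x"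
proof (induction \<sigma> rule: rev_induct)
  case (snoc y \<sigma>)
  then show ?case
    using since_last_snoc[of "h @ \<sigma>" y x] since_last_snoc[of \<sigma> y x] by (auto simp: ts_obs_def)
qed simp

lemma mtfo_step_depends_on_parity_obs: "depends_on_history_via mtfo_step parity_obs S"
  unfolding depends_on_history_via_def hist_equiv_def parity_obs_def mtfo_step_def by auto

lemma mtfe_step_depends_on_parity_obs: "depends_on_history_via mtfe_step parity_obs S"
  unfolding depends_on_history_via_def hist_equiv_def parity_obs_def mtfe_step_def by auto

lemma ts_step_depends_on_ts_obs: "depends_on_history_via ts_step ts_obs S"
  unfolding depends_on_history_via_def hist_equiv_def ts_obs_def ts_step_def by (auto simp: Let_def)

fun run :: "('a list \<Rightarrow> 'a list \<Rightarrow> 'a \<Rightarrow> 'a list) \<Rightarrow> 'a list \<Rightarrow> 'a list \<Rightarrow> 'a list \<Rightarrow> nat \<times> 'a list" where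
  "run f hs xs [] = (0, xs)"
| "run f hs xs (x # \<sigma>) = (case run f (hs @ [x]) (f hs xs x) \<sigma> of (c, ys) \<Rightarrow> (pos xs x + 1 + c, ys))"

lemma fst_run: "fst (run f hs xs \<sigma>) = run_cost f hs xs \<sigma>"
  by (induction \<sigma> arbitrary: hs xs) (simp_all add: case_prod_beta)

lemma run_append:
  "run f hs xs \<sigma> = (c, ys) \<Longrightarrow> run f (hs @ \<sigma>) ys \<tau> = (d, zs) \<Longrightarrow> run f hs xs (\<sigma> @ \<tau>) = (c + d, zs)"
  by (induction \<sigma> arbitrary: hs xs c) (auto split: prod.splits)

lemma run_hist_equiv:
  assumes "depends_on_history_via f obs S" "snoc_congruent obs"
  shows "hist_equiv obs S h h' \<Longrightarrow> set \<sigma> \<subseteq> S \<Longrightarrow> run f h xs \<sigma> = run f h' xs \<sigma>"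
proof (induction \<sigma> arbitrary: h h' xs)
  case (Cons x \<sigma>)
  have "f h xs x = f h' xs x"
    using assms(1) Cons.prems unfolding depends_on_history_via_def by simp
  moreover have "hist_equiv obs S (h @ [x]) (h' @ [x])"
    using hist_equiv_append[OF assms(2) Cons.prems(1)] .
  ultimately show ?case using Cons by simp
qed simp

lemma run_append_hist_equiv:
  assumes "depends_on_history_via f obs S" "snoc_congruent obs"
    and "run f h xs \<sigma> = run f h' xs \<sigma>" "hist_equiv obs S (h @ \<sigma>) (h' @ \<sigma>)" "set \<tau> \<subseteq> S"
  shows "run f h xs (\<sigma> @ \<tau>) = run f h' xs (\<sigma> @ \<tau>)"
proof -
  obtain c ys where "run f h xs \<sigma> = (c, ys)" by fastforce
  moreover obtain d zs where "run f (h @ \<sigma>) ys \<tau> = (d, zs)" by fastforce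
  moreover have "run f (h' @ \<sigma>) ys \<tau> = (d, zs)"
    using run_hist_equiv[OF assms(1,2,4,5)] calculation(2) by simp
  ultimately show ?thesis using assms(3) by (metis run_append)
qed

fun run_segments ::
  "('a list \<Rightarrow> 'a list \<Rightarrow> 'a \<Rightarrow> 'a list) \<Rightarrow> ('a list \<Rightarrow> 'a \<Rightarrow> 'b) \<Rightarrow> 'a list \<Rightarrow>
   'a list \<Rightarrow> 'a list \<Rightarrow> ('a list \<times> 'a list) list \<Rightarrow> (nat \<times> 'a list \<times> 'a list) option" where
  "run_segments f obs S H xs [] = Some (0, H, xs)"
| \<comment> \<open>\<open>let\<close> rather than a tuple pattern, so that evaluation by \<open>code_simp\<close> computes the
     run on \<open>P\<close> before touching the recursive call\<close>
  "run_segments f obs S H xs ((P, H') # segs) =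
     (if set P \<subseteq> set S \<and> (\<forall>x\<in>set S. obs (H @ P) x = obs H' x)
      then let r = run f H xs P in
        map_option (\<lambda>(d, H'', zs). (fst r + d, H'', zs)) (run_segments f obs S H' (snd r) segs)
      else None)"

lemma run_segments_sound:
  assumes "depends_on_history_via f obs (set S)" "snoc_congruent obs"
  shows "run_segments f obs S H xs segs = Some (c, H', ys) \<Longrightarrow> hist_equiv obs (set S) h H \<Longrightarrow>
    run f h xs (concat (map fst segs)) = (c, ys) \<and> hist_equiv obs (set S) (h @ concat (map fst segs)) H'"
proof (induction segs arbitrary: h H xs c)
  case (Cons seg segs)
  obtain P H1 where seg: "seg = (P, H1)" by fastforce
  obtain c1 xs1 where run1: "run f H xs P = (c1, xs1)" by fastforce
  from Cons.prems seg run1 obtain d where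
    sub: "set P \<subseteq> set S" and equiv1: "hist_equiv obs (set S) (H @ P) H1" and
    rest: "run_segments f obs S H1 xs1 segs = Some (d, H', ys)" and c: "c = c1 + d"
    by (auto simp: hist_equiv_def Let_def split: if_splits)
  have "run f h xs P = (c1, xs1)"
    using run_hist_equiv[OF assms Cons.prems(2) sub] run1 by simp
  moreover have "hist_equiv obs (set S) (h @ P) H1"
    using hist_equiv_trans[OF hist_equiv_append[OF assms(2) Cons.prems(2)] equiv1] .
  ultimately show ?case
    using Cons.IH[OF rest, of "h @ P"] c seg by (auto intro: run_append)
qed simp

lemma run_replicate:
  assumes "depends_on_history_via f obs (set S)" "snoc_congruent obs"
    and "run_segments f obs S H xs segs = Some (c, H, xs)" and "hist_equiv obs (set S) h H"
  shows "run f h xs (concat (replicate k (concat (map fst segs)))) = (k * c, xs)"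
  using assms(4)
proof (induction k arbitrary: h)
  case (Suc k)
  let ?D = "concat (map fst segs)"
  from run_segments_sound[OF assms(1-3) Suc.prems]
  have "run f h xs ?D = (c, xs)" "hist_equiv obs (set S) (h @ ?D) H" by auto
  with Suc.IH show ?case by (auto intro: run_append)
qed simp

definition front_or_stay :: "bool \<Rightarrow> 'a list \<Rightarrow> 'a list \<Rightarrow> 'a \<Rightarrow> 'a list" where
  "front_or_stay b hs xs x = move_to (if b then 0 else pos xs x) x xs"

lemma off_cost_run_free_moves:
  assumes "\<And>hs ys x. \<exists>j \<le> pos ys x. f hs ys x = move_to j x ys"
  shows "run f hs xs \<sigma> = (c, ys) \<Longrightarrow> off_cost ys \<tau> d \<Longrightarrow> off_cost xs (\<sigma> @ \<tau>) (c + d)"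
proof (induction \<sigma> arbitrary: hs xs c)
  case (Cons x \<sigma>)
  obtain c' where run': "run f (hs @ [x]) (f hs xs x) \<sigma> = (c', ys)" and c: "c = pos xs x + 1 + c'"
    using Cons.prems(1) by (auto split: prod.splits)
  obtain j where "j \<le> pos xs x" and step: "f hs xs x = move_to j x xs"
    using assms by blast
  moreover have "off_cost (move_to j x xs) (\<sigma> @ \<tau>) (c' + d)"
    using Cons.IH[OF run' Cons.prems(2)] step by simp
  ultimately have "off_cost xs (x # \<sigma> @ \<tau>) (0 + (pos xs x + 1) + (c' + d))"
    by (intro off_cons swaps_refl)
  then show ?case by (simp add: c add.assoc)
qed simp

fun offline_segments :: "'a list \<Rightarrow> ('a list \<times> bool) list \<Rightarrow> nat \<times> 'a list" where
  "offline_segments xs [] = (0, xs)"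
| "offline_segments xs ((P, b) # segs) =
     (let r = run (front_or_stay b) [] xs P; s = offline_segments (snd r) segs in (fst r + fst s, snd s))"

lemma off_cost_offline_segments:
  "offline_segments xs segs = (c, ys) \<Longrightarrow> off_cost ys \<tau> d \<Longrightarrow>
   off_cost xs (concat (map fst segs) @ \<tau>) (c + d)"
proof (induction segs arbitrary: xs c)
  case (Cons seg segs)
  obtain P b where seg: "seg = (P, b)" by fastforce
  obtain c1 xs1 where run1: "run (front_or_stay b) [] xs P = (c1, xs1)"
    by fastforce
  obtain c2 where rest: "offline_segments xs1 segs = (c2, ys)" and c: "c = c1 + c2"
    using Cons.prems(1) seg run1 by (cases "offline_segments xs1 segs") simp
  have "off_cost xs (P @ concat (map fst segs) @ \<tau>) (c1 + (c2 + d))"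
    by (rule off_cost_run_free_moves[OF _ run1 Cons.IH[OF rest Cons.prems(2)]])
       (auto simp: front_or_stay_def)
  then show ?case by (simp add: seg c add.assoc)
qed (simp add: off_nil)

lemma OPT_replicate_le:
  assumes "offline_segments xs segs = (c, xs)"
  shows "OPT xs (concat (replicate k (concat (map fst segs)))) \<le> k * c"
proof -
  have "off_cost xs (concat (replicate k (concat (map fst segs)))) (k * c)"
  proof (induction k)
    case (Suc k)
    show ?case using off_cost_offline_segments[OF assms Suc.IH] by simp
  qed (simp add: off_nil)
  then show ?thesis unfolding OPT_def by (rule Least_le)
qed

definition stutter :: "nat \<Rightarrow> 'a list \<Rightarrow> 'a list" where
  "stutter m xs = concat (map (replicate m) xs)"

definition items :: "nat list" where
  "items = [0..<28]"

definition round :: "nat list list" where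
  "round = [items, stutter 2 items, stutter 2 items, rev items, stutter 3 (rev items)]"

definition rounds :: "nat \<Rightarrow> nat list" where
  "rounds n = concat (replicate n (concat round))"

text \<open>After the i-th sweep of two rounds, every item has been requested equally often; the
  representative history is the whole item list if that number is odd and empty otherwise.\<close>
definition parity_reps :: "nat list list" where
  "parity_reps = [items, items, items, [], items, [], [], [], items, []]"

lemma run_segments_ts:
  "run_segments ts_step ts_obs items (stutter 3 (rev items)) items (map (\<lambda>P. (P, P)) round) =
   Some (4032, stutter 3 (rev items), items)"
  by code_simp

text \<open>On the first sweep TS moves nothing, both from the empty history (all requests are first
  requests) and from the steady one (every item in front was requested three times since).\<close>
lemma run_ts_first_sweep: "run ts_step [] items items = run ts_step (stutter 3 (rev items)) items items"
  by code_simp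

lemma run_segments_mtfo:
  "run_segments mtfo_step parity_obs items [] items (zip (round @ round) parity_reps) =
   Some (8064, [], items)"
  by code_simp

lemma run_segments_mtfe:
  "run_segments mtfe_step parity_obs items [] items (zip (round @ round) parity_reps) =
   Some (8064, [], items)"
  by code_simp

lemma offline_segments_round: "offline_segments items (zip round [False, False, True, False, True]) = (2520, items)"
  by code_simp

lemma set_rounds: "set (rounds n) \<subseteq> set items"
  by (auto simp: rounds_def round_def stutter_def)

lemma rounds_double: "concat (replicate k (concat (round @ round))) = rounds (2 * k)"
  by (induction k) (simp_all add: rounds_def)

lemma TS_rounds: "TS items (rounds n) = n * 4032"
proof (cases n)
  case Suc
  let ?H = "stutter 3 (rev items)"
  obtain \<tau> where \<tau>: "rounds n = items @ \<tau>" and "set \<tau> \<subseteq> set items"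
    using Suc set_rounds[of n] by (auto simp: rounds_def round_def)
  have "hist_equiv ts_obs (set items) ([] @ items) (?H @ items)"
    by (simp add: hist_equiv_def ts_obs_append)
  then have "run ts_step [] items (rounds n) = run ts_step ?H items (rounds n)"
    using run_append_hist_equiv[OF ts_step_depends_on_ts_obs snoc_congruent_ts_obs run_ts_first_sweep]
      \<tau> \<open>set \<tau> \<subseteq> set items\<close> by simp
  also have "\<dots> = (n * 4032, items)"
    using run_replicate[OF ts_step_depends_on_ts_obs snoc_congruent_ts_obs run_segments_ts hist_equiv_refl]
    by (simp add: rounds_def comp_def)
  finally show ?thesis by (simp add: TS_def fst_run[symmetric])
qed (simp add: TS_def rounds_def)

lemma MTFO_rounds: "MTFO items (rounds (2 * k)) = k * 8064"
  using run_replicate[OF mtfo_step_depends_on_parity_obs snoc_congruent_parity_obs run_segments_mtfo hist_equiv_refl, of k]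
  by (simp add: MTFO_def fst_run[symmetric] round_def parity_reps_def rounds_double[symmetric])

lemma MTFE_rounds: "MTFE items (rounds (2 * k)) = k * 8064"
  using run_replicate[OF mtfe_step_depends_on_parity_obs snoc_congruent_parity_obs run_segments_mtfe hist_equiv_refl, of k]
  by (simp add: MTFE_def fst_run[symmetric] round_def parity_reps_def rounds_double[symmetric])

lemma OPT_rounds_le: "OPT items (rounds n) \<le> n * 2520"
  using OPT_replicate_le[OF offline_segments_round, of n] by (simp add: rounds_def round_def)

lemma linear_gap:
  fixes a d c b :: real
  assumes "0 < a" "0 \<le> d" "c * d < a"
  obtains k :: nat where "\<And>x. 0 \<le> x \<Longrightarrow> x \<le> k * d \<Longrightarrow> c * x + b < k * a"
proof -
  define c' where "c' = max c 0"
  define \<delta> where "\<delta> = a - c' * d"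
  have "0 < \<delta>" using assms by (auto simp: \<delta>_def c'_def max_def)
  define k where "k = Suc (nat \<lceil>b / \<delta>\<rceil>)"
  have "b / \<delta> \<le> real (nat \<lceil>b / \<delta>\<rceil>)" by linarith
  then have "b < k * \<delta>"
    using \<open>0 < \<delta>\<close> unfolding k_def by (simp add: pos_divide_le_eq algebra_simps)
  show ?thesis
  proof (rule that)
    fix x :: real
    assume "0 \<le> x" "x \<le> k * d"
    then have "c * x \<le> c' * x" "c' * x \<le> c' * (k * d)"
      by (simp_all add: c'_def mult_right_mono mult_left_mono)
    with \<open>b < k * \<delta>\<close> show "c * x + b < k * a" by (simp add: \<delta>_def algebra_simps)
  qed
qed

theorem theorem5:
  fixes c b :: real
  assumes "c < 1.6"
  shows "\<exists>(xs :: nat list) \<sigma>. distinct xs \<and> set \<sigma> \<subseteq> set xs \<and>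
           real (min (TS xs \<sigma>) (min (MTFO xs \<sigma>) (MTFE xs \<sigma>))) > c * real (OPT xs \<sigma>) + b"
proof -
  obtain k where gap: "\<And>x. 0 \<le> x \<Longrightarrow> x \<le> real k * 5040 \<Longrightarrow> c * x + b < real k * 8064"
    by (rule linear_gap[of 8064 5040 c b]) (use assms in auto)
  let ?\<sigma> = "rounds (2 * k)"
  have "min (TS items ?\<sigma>) (min (MTFO items ?\<sigma>) (MTFE items ?\<sigma>)) = k * 8064"
    by (simp add: TS_rounds MTFO_rounds MTFE_rounds)
  moreover have "real (OPT items ?\<sigma>) \<le> real k * 5040"
    using OPT_rounds_le[of "2 * k"] by simp
  ultimately show ?thesis
    using gap set_rounds by (intro exI[of _ items] exI[of _ ?\<sigma>]) (simp add: items_def)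
qed

end
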